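(* The set $\mathcal{I}_{\mathrm{str}}(\Lambda)$ has the cardinality of the continuum.
   Context: Let $\mathbf{2}=\{0,1\}$. A partial function of arity $n$ on $\mathbf{2}$ is a map $f:\operatorname{dom} f\to\mathbf{2}$ with $\operatorname{dom} f\subseteq \mathbf{2}^n$; it is total if $\operatorname{dom} f=\mathbf{2}^n$. $P_{\mathbf{2}}$ is the set of all partial functions, $O_{\mathbf{2}}$ the set of total ones. Composition $F=f(g_1,\dots,g_n)$ is given by $F(\mathbf{x})=f(g_1(\mathbf{x}),\dots,g_n(\mathbf{x}))$ on $\operatorname{dom} F=\{\mathbf{x}\in\bigcap_i\operatorname{dom} g_i : (g_1(\mathbf{x}),\dots,g_n(\mathbf{x}))\in\operatorname{dom} f\}$. A partial clone is a composition-closed subset of $P_{\mathbf{2}}$ containing all projections; a total clone is one contained in $O_{\mathbf{2}}$. A partial clone $X$ is strong if it contains every restriction of each of its members. For a total clone $C$, $\mathcal{I}_{\mathrm{str}}(C)$ is the set of all strong partial clones $X$ with $X\cap O_{\mathbf{2}}=C$. $\Lambda$ is the total clone generated by the binary conjunction $\land$ and the constant functions $c_0,c_1$. *)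

theory Defs
  imports Complex_Main "HOL-Library.Equipollence"
begin

text \<open>A partial Boolean function is represented as a pair (n, f) where n is its arity
  and f maps argument tuples (bool lists, True = 1) to an optional value; the domain of f
  (the set of lists where f is defined) must consist of lists of length n. Arities are
  at least 1, as usual in clone theory.\<close>

type_synonym pfun = "nat \<times> (bool list \<Rightarrow> bool option)"

definition arity :: "pfun \<Rightarrow> nat" where "arity p = fst p"
definition fn :: "pfun \<Rightarrow> bool list \<Rightarrow> bool option" where "fn p = snd p"

definition P2 :: "pfun set" where
  "P2 = {p. arity p \<ge> 1 \<and> (\<forall>xs. fn p xs \<noteq> None \<longrightarrow> length xs = arity p)}"

definition O2 :: "pfun set" where
  "O2 = {p \<in> P2. \<forall>xs. length xs = arity p \<longrightarrow> fn p xs \<noteq> None}"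

definition comp :: "nat \<Rightarrow> pfun \<Rightarrow> pfun list \<Rightarrow> pfun" where
  "comp m f gs = (m, \<lambda>xs.
     if length xs = m \<and> (\<forall>g\<in>set gs. fn g xs \<noteq> None)
     then fn f (map (\<lambda>g. the (fn g xs)) gs) else None)"

definition proj :: "nat \<Rightarrow> nat \<Rightarrow> pfun" where
  "proj m i = (m, \<lambda>xs. if length xs = m then Some (xs ! i) else None)"

definition partial_clone :: "pfun set \<Rightarrow> bool" where
  "partial_clone X \<longleftrightarrow> X \<subseteq> P2
     \<and> (\<forall>m i. 1 \<le> m \<and> i < m \<longrightarrow> proj m i \<in> X)
     \<and> (\<forall>f\<in>X. \<forall>m gs. m \<ge> 1 \<and> length gs = arity f \<and> set gs \<subseteq> X
            \<and> (\<forall>g\<in>set gs. arity g = m) \<longrightarrow> comp m f gs \<in> X)"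

definition restriction :: "pfun \<Rightarrow> pfun \<Rightarrow> bool" where
  "restriction g f \<longleftrightarrow> arity g = arity f \<and> fn g \<subseteq>\<^sub>m fn f"

definition strong :: "pfun set \<Rightarrow> bool" where
  "strong X \<longleftrightarrow> (\<forall>f\<in>X. \<forall>g. restriction g f \<longrightarrow> g \<in> X)"

definition I_str :: "pfun set \<Rightarrow> pfun set set" where
  "I_str C = {X. partial_clone X \<and> strong X \<and> X \<inter> O2 = C}"

definition clone_gen :: "pfun set \<Rightarrow> pfun set" where
  "clone_gen S = \<Inter>{X. partial_clone X \<and> S \<subseteq> X}"

definition conj2 :: pfun where
  "conj2 = (2, \<lambda>xs. if length xs = 2 then Some (xs ! 0 \<and> xs ! 1) else None)"

definition const1 :: "bool \<Rightarrow> pfun" where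
  "const1 b = (1, \<lambda>xs. if length xs = 1 then Some b else None)"

definition Lambda :: "pfun set" where
  "Lambda = clone_gen {conj2, const1 False, const1 True}"

end

theory Submission
  imports Defs "HOL-Analysis.Abstract_Topology_2"
begin

text \<open>Every total function preserving the ternary relation \<open>x\<^sub>1 \<and> x\<^sub>2 \<le> x\<^sub>0\<close> is a constant or a
  conjunction of variables, i.e. lies in \<open>\<Lambda>\<close>, while \<open>\<Lambda>\<close> preserves that relation and every \<open>\<rho>\<^sub>n\<close>.
  Hence for each set \<open>S\<close> of naturals the partial functions preserving \<open>x\<^sub>1 \<and> x\<^sub>2 \<le> x\<^sub>0\<close> and all
  \<open>\<rho>\<^sub>n\<^sub>+\<^sub>5\<close> with \<open>n \<notin> S\<close> form a strong partial clone with total part \<open>\<Lambda>\<close>. These clones are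
  pairwise distinct: the partial function of arity \<open>k \<ge> 5\<close> that is 1 on the tuples with exactly two
  zeros and 0 on the zero tuple preserves \<open>x\<^sub>1 \<and> x\<^sub>2 \<le> x\<^sub>0\<close> and every \<open>\<rho>\<^sub>n\<close> with \<open>n \<noteq> k\<close>, but
  not \<open>\<rho>\<^sub>k\<close>. This gives continuum many members of \<open>\<I>\<^sub>s\<^sub>t\<^sub>r(\<Lambda>)\<close>; there are no more, as there
  are only countably many partial functions.\<close>

section \<open>Partial functions and preservation of relations\<close>

lemma pfun_eqI: "arity p = arity q \<Longrightarrow> (\<And>xs. fn p xs = fn q xs) \<Longrightarrow> p = q"
  unfolding arity_def fn_def by (simp add: prod_eq_iff fun_eq_iff)

lemma arity_proj [simp]: "arity (proj m i) = m"
  and fn_proj: "fn (proj m i) xs = (if length xs = m then Some (xs ! i) else None)"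
  by (simp_all add: proj_def arity_def fn_def)

lemma arity_comp [simp]: "arity (comp m f gs) = m"
  and fn_comp: "fn (comp m f gs) xs = (if length xs = m \<and> (\<forall>g\<in>set gs. fn g xs \<noteq> None)
     then fn f (map (\<lambda>g. the (fn g xs)) gs) else None)"
  by (simp_all add: comp_def arity_def fn_def)

lemma arity_const1 [simp]: "arity (const1 b) = 1"
  and fn_const1: "fn (const1 b) xs = (if length xs = 1 then Some b else None)"
  by (simp_all add: const1_def arity_def fn_def)

lemma arity_conj2 [simp]: "arity conj2 = 2"
  and fn_conj2: "fn conj2 xs = (if length xs = 2 then Some (xs ! 0 \<and> xs ! 1) else None)"
  by (simp_all add: conj2_def arity_def fn_def)

lemma partial_clone_proj: "partial_clone X \<Longrightarrow> 1 \<le> m \<Longrightarrow> i < m \<Longrightarrow> proj m i \<in> X"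
  unfolding partial_clone_def by blast

lemma partial_clone_comp:
  assumes "partial_clone X" "f \<in> X" "1 \<le> m" "length gs = arity f" "set gs \<subseteq> X"
    "\<And>g. g \<in> set gs \<Longrightarrow> arity g = m"
  shows "comp m f gs \<in> X"
  using assms unfolding partial_clone_def by blast

text \<open>A relation is a set of tuples indexed by \<open>'i\<close>. The rows \<open>r i\<close> of a matrix \<open>r\<close> are argument
  tuples of \<open>f\<close>, so its columns and the column of values are again \<open>'i\<close>-indexed tuples.\<close>

definition preserves :: "pfun \<Rightarrow> ('i \<Rightarrow> bool) set \<Rightarrow> bool" where
  "preserves f R \<longleftrightarrow> (\<forall>r. (\<forall>i. fn f (r i) \<noteq> None) \<longrightarrow> (\<forall>c<arity f. (\<lambda>i. r i ! c) \<in> R)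
      \<longrightarrow> (\<lambda>i. the (fn f (r i))) \<in> R)"

lemma preservesI:
  assumes "\<And>r. \<lbrakk>\<And>i. fn f (r i) \<noteq> None; \<And>c. c < arity f \<Longrightarrow> (\<lambda>i. r i ! c) \<in> R\<rbrakk>
      \<Longrightarrow> (\<lambda>i. the (fn f (r i))) \<in> R"
  shows "preserves f R"
  using assms unfolding preserves_def by blast

lemma preservesD:
  assumes "preserves f R" "\<And>i. fn f (r i) \<noteq> None" "\<And>c. c < arity f \<Longrightarrow> (\<lambda>i. r i ! c) \<in> R"
  shows "(\<lambda>i. the (fn f (r i))) \<in> R"
  using assms unfolding preserves_def by blast

lemma preserves_proj:
  assumes "i < m" shows "preserves (proj m i) R"
proof (rule preservesI)
  fix r :: "'a \<Rightarrow> bool list"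
  assume dom: "\<And>j. fn (proj m i) (r j) \<noteq> None"
    and cols: "\<And>c. c < arity (proj m i) \<Longrightarrow> (\<lambda>j. r j ! c) \<in> R"
  have "the (fn (proj m i) (r j)) = r j ! i" for j
    using dom[of j] by (simp add: fn_proj split: if_splits)
  then show "(\<lambda>j. the (fn (proj m i) (r j))) \<in> R"
    using cols assms by simp
qed

lemma preserves_comp:
  assumes f: "preserves f R" and gs: "\<And>g. g \<in> set gs \<Longrightarrow> preserves g R"
    and len: "length gs = arity f" and ar: "\<And>g. g \<in> set gs \<Longrightarrow> arity g = m"
  shows "preserves (comp m f gs) R"
proof (rule preservesI)
  fix r :: "'a \<Rightarrow> bool list"
  assume dom: "\<And>j. fn (comp m f gs) (r j) \<noteq> None"
    and cols: "\<And>c. c < arity (comp m f gs) \<Longrightarrow> (\<lambda>j. r j ! c) \<in> R"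
  define s where "s j = map (\<lambda>g. the (fn g (r j))) gs" for j
  have dom_gs: "fn g (r j) \<noteq> None" if "g \<in> set gs" for j g
    using dom[of j] that by (simp add: fn_comp split: if_splits)
  have dom_f: "fn f (s j) \<noteq> None" and val: "fn (comp m f gs) (r j) = fn f (s j)" for j
    using dom[of j] by (auto simp: fn_comp s_def split: if_splits)
  have "(\<lambda>j. the (fn g (r j))) \<in> R" if "g \<in> set gs" for g
    using preservesD[OF gs[OF that] dom_gs[OF that]] cols ar[OF that] by simp
  then have "(\<lambda>j. s j ! c) \<in> R" if "c < arity f" for c
    using that len by (simp add: s_def)
  then show "(\<lambda>j. the (fn (comp m f gs) (r j))) \<in> R"
    using preservesD[OF f dom_f] val by simp
qed

lemma restriction_fn_eq: "restriction g f \<Longrightarrow> fn g xs \<noteq> None \<Longrightarrow> fn f xs = fn g xs"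
  unfolding restriction_def map_le_def by (metis domIff)

lemma preserves_restriction:
  assumes "restriction g f" "preserves f R" shows "preserves g R"
proof (rule preservesI)
  fix r :: "'a \<Rightarrow> bool list"
  assume dom: "\<And>j. fn g (r j) \<noteq> None" and cols: "\<And>c. c < arity g \<Longrightarrow> (\<lambda>j. r j ! c) \<in> R"
  have eq: "fn f (r j) = fn g (r j)" for j
    using restriction_fn_eq[OF assms(1) dom[of j]] .
  have "arity g = arity f" using assms(1) by (simp add: restriction_def)
  then have "(\<lambda>j. the (fn f (r j))) \<in> R"
    using preservesD[OF assms(2)] dom cols eq by metis
  then show "(\<lambda>j. the (fn g (r j))) \<in> R" using eq by simp
qed

lemma preserves_const1:
  assumes "(\<lambda>i. b) \<in> R" shows "preserves (const1 b) R"
proof (rule preservesI)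
  fix r :: "'a \<Rightarrow> bool list"
  assume dom: "\<And>i. fn (const1 b) (r i) \<noteq> None"
  have "the (fn (const1 b) (r i)) = b" for i
    using dom[of i] by (simp add: fn_const1 split: if_splits)
  then show "(\<lambda>i. the (fn (const1 b) (r i))) \<in> R" using assms by simp
qed

lemma preserves_conj2:
  assumes "\<And>x y. x \<in> R \<Longrightarrow> y \<in> R \<Longrightarrow> (\<lambda>i. x i \<and> y i) \<in> R" shows "preserves conj2 R"
proof (rule preservesI)
  fix r :: "'a \<Rightarrow> bool list"
  assume dom: "\<And>i. fn conj2 (r i) \<noteq> None" and cols: "\<And>c. c < arity conj2 \<Longrightarrow> (\<lambda>i. r i ! c) \<in> R"
  have "the (fn conj2 (r i)) = (r i ! 0 \<and> r i ! 1)" for i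
    using dom[of i] by (simp add: fn_conj2 split: if_splits)
  moreover have "(\<lambda>i. r i ! 0) \<in> R" "(\<lambda>i. r i ! 1) \<in> R"
    using cols by simp_all
  ultimately show "(\<lambda>i. the (fn conj2 (r i))) \<in> R" using assms by simp
qed

section \<open>Strong partial clones of polymorphisms\<close>

definition pPol :: "('i \<Rightarrow> bool) set \<Rightarrow> pfun set" where
  "pPol R = {f \<in> P2. preserves f R}"

lemma proj_in_P2: "1 \<le> m \<Longrightarrow> proj m i \<in> P2"
  by (simp add: P2_def proj_def arity_def fn_def)

lemma comp_in_P2: "1 \<le> m \<Longrightarrow> comp m f gs \<in> P2"
  by (simp add: P2_def comp_def arity_def fn_def)

lemma restriction_in_P2:
  assumes "restriction g f" "f \<in> P2" shows "g \<in> P2"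
proof -
  have "length xs = arity g" if "fn g xs \<noteq> None" for xs
  proof -
    have "fn f xs = fn g xs" using restriction_fn_eq[OF assms(1) that] .
    then show ?thesis using assms that unfolding P2_def restriction_def by auto
  qed
  then show ?thesis using assms unfolding P2_def restriction_def by auto
qed

lemma partial_clone_pPol: "partial_clone (pPol R)"
  unfolding partial_clone_def pPol_def
  by (auto simp: proj_in_P2 comp_in_P2 subset_iff intro: preserves_proj preserves_comp)

lemma strong_pPol: "strong (pPol R)"
  unfolding strong_def pPol_def
  by (auto intro: restriction_in_P2 preserves_restriction)

lemma partial_clone_Inter:
  assumes "\<Y> \<noteq> {}" "\<And>Y. Y \<in> \<Y> \<Longrightarrow> partial_clone Y" shows "partial_clone (\<Inter>\<Y>)"
  unfolding partial_clone_def
proof (intro conjI allI impI ballI)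
  show "\<Inter>\<Y> \<subseteq> P2" using assms unfolding partial_clone_def by blast
  show "proj m i \<in> \<Inter>\<Y>" if "1 \<le> m \<and> i < m" for m i
    using assms(2) that unfolding partial_clone_def by blast
  show "comp m f gs \<in> \<Inter>\<Y>" if "f \<in> \<Inter>\<Y>"
    and "1 \<le> m \<and> length gs = arity f \<and> set gs \<subseteq> \<Inter>\<Y> \<and> (\<forall>g\<in>set gs. arity g = m)" for f m gs
    using assms(2) that unfolding partial_clone_def by (simp add: subset_iff)
qed

lemma strong_Inter: "(\<And>Y. Y \<in> \<Y> \<Longrightarrow> strong Y) \<Longrightarrow> strong (\<Inter>\<Y>)"
  unfolding strong_def by blast

section \<open>The clone \<open>\<Lambda>\<close> and the relation \<open>x\<^sub>1 \<and> x\<^sub>2 \<le> x\<^sub>0\<close>\<close>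

lemma conj2_in_O2: "conj2 \<in> O2"
  and const1_in_O2: "const1 b \<in> O2"
  by (auto simp: O2_def P2_def fn_conj2 fn_const1)

lemma mem_LambdaI:
  assumes "\<And>X. \<lbrakk>partial_clone X; conj2 \<in> X; const1 False \<in> X; const1 True \<in> X\<rbrakk> \<Longrightarrow> f \<in> X"
  shows "f \<in> Lambda"
  using assms unfolding Lambda_def clone_gen_def by blast

lemma Lambda_subset_clone:
  assumes "partial_clone X" "conj2 \<in> X" "const1 False \<in> X" "const1 True \<in> X"
  shows "Lambda \<subseteq> X"
  using assms unfolding Lambda_def clone_gen_def by blast

lemma Lambda_subset_pPol:
  assumes "\<And>x y. x \<in> R \<Longrightarrow> y \<in> R \<Longrightarrow> (\<lambda>i. x i \<and> y i) \<in> R" and "\<And>b. (\<lambda>i. b) \<in> R"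
  shows "Lambda \<subseteq> pPol R"
  using conj2_in_O2 const1_in_O2 assms
  by (intro Lambda_subset_clone partial_clone_pPol)
    (auto simp: pPol_def O2_def intro: preserves_conj2 preserves_const1)

lemma partial_clone_O2: "partial_clone O2"
  unfolding partial_clone_def
proof (intro conjI allI impI ballI)
  show "O2 \<subseteq> P2" by (auto simp: O2_def)
  show "proj m i \<in> O2" if "1 \<le> m \<and> i < m" for m i
    using that by (simp add: O2_def proj_in_P2 fn_proj)
  show "comp m f gs \<in> O2" if f: "f \<in> O2"
    and gs: "1 \<le> m \<and> length gs = arity f \<and> set gs \<subseteq> O2 \<and> (\<forall>g\<in>set gs. arity g = m)" for f m gs
  proof -
    have "fn (comp m f gs) xs \<noteq> None" if "length xs = m" for xs
      using f gs that by (auto simp: O2_def fn_comp subset_iff)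
    then show ?thesis using gs by (simp add: O2_def comp_in_P2)
  qed
qed

lemma Lambda_subset_O2: "Lambda \<subseteq> O2"
  using Lambda_subset_clone[OF partial_clone_O2] conj2_in_O2 const1_in_O2 by blast

definition total_fn :: "nat \<Rightarrow> (bool list \<Rightarrow> bool) \<Rightarrow> pfun" where
  "total_fn k v = (k, \<lambda>xs. if length xs = k then Some (v xs) else None)"

lemma arity_total_fn [simp]: "arity (total_fn k v) = k"
  and fn_total_fn: "fn (total_fn k v) xs = (if length xs = k then Some (v xs) else None)"
  by (simp_all add: total_fn_def arity_def fn_def)

lemma O2_eq_total_fn:
  assumes "f \<in> O2" shows "f = total_fn (arity f) (\<lambda>xs. the (fn f xs))"
proof -
  have "fn f xs = (if length xs = arity f then Some (the (fn f xs)) else None)" for xs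
    using assms unfolding O2_def P2_def by auto
  then show ?thesis by (intro pfun_eqI) (simp_all add: fn_total_fn)
qed

lemma total_fn_const_mem:
  assumes X: "partial_clone X" "const1 b \<in> X" and k: "1 \<le> k"
  shows "total_fn k (\<lambda>_. b) \<in> X"
proof -
  have "comp k (const1 b) [proj k 0] \<in> X"
    using X k by (intro partial_clone_comp) (auto intro: partial_clone_proj)
  moreover have "comp k (const1 b) [proj k 0] = total_fn k (\<lambda>_. b)"
    by (intro pfun_eqI) (simp_all add: fn_comp fn_total_fn fn_const1 fn_proj)
  ultimately show ?thesis by simp
qed

lemma total_fn_Ball_mem:
  assumes X: "partial_clone X" "conj2 \<in> X" "const1 True \<in> X" and k: "1 \<le> k"
  shows "set is \<subseteq> {..<k} \<Longrightarrow> total_fn k (\<lambda>xs. \<forall>i\<in>set is. xs ! i) \<in> X"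
proof (induction "is")
  case Nil
  then show ?case using total_fn_const_mem[OF X(1,3) k] by simp
next
  case (Cons i js)
  let ?g = "total_fn k (\<lambda>xs. \<forall>j\<in>set js. xs ! j)"
  have "comp k conj2 [proj k i, ?g] \<in> X"
    using Cons X k by (intro partial_clone_comp) (auto intro: partial_clone_proj)
  moreover have "comp k conj2 [proj k i, ?g] = total_fn k (\<lambda>xs. \<forall>j\<in>set (i # js). xs ! j)"
    by (intro pfun_eqI) (simp_all add: fn_comp fn_total_fn fn_conj2 fn_proj)
  ultimately show ?case by simp
qed

lemma meet_closed_fn_cases:
  fixes v :: "bool list \<Rightarrow> bool"
  assumes closed: "\<And>x y z. \<lbrakk>length x = k; length y = k; length z = k;
      \<And>c. \<lbrakk>c < k; y ! c; z ! c\<rbrakk> \<Longrightarrow> x ! c; v y; v z\<rbrakk> \<Longrightarrow> v x"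
  obtains "\<forall>xs. length xs = k \<longrightarrow> \<not> v xs"
    | A where "A \<subseteq> {..<k}" "\<forall>xs. length xs = k \<longrightarrow> v xs = (\<forall>i\<in>A. xs ! i)"
proof (cases "v (replicate k True)")
  case False
  then have "\<not> v xs" if "length xs = k" for xs
    using closed[of "replicate k True" xs xs] that by auto
  then show ?thesis using that(1) by blast
next
  case True
  txt \<open>\<open>A\<close> collects the coordinates whose zeroing falsifies \<open>v\<close>; every tuple that is 1 on \<open>A\<close> is
    the meet of tuples with a single zero outside \<open>A\<close>.\<close>
  define e where "e i = (replicate k True)[i := False]" for i
  define A where "A = {i. i < k \<and> \<not> v (e i)}"
  have len_e: "length (e i) = k" and nth_e: "c < k \<Longrightarrow> e i ! c = (c \<noteq> i)" for i c
    by (simp add: e_def, cases "c = i") (simp_all add: e_def)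
  define ones_off where "ones_off Z = map (\<lambda>c. c \<notin> Z) [0..<k]" for Z
  have v_ones_off: "v (ones_off Z)" if "finite Z" "Z \<subseteq> {..<k} - A" for Z
    using that
  proof (induction Z rule: finite_induct)
    case empty
    then show ?case using True by (simp add: ones_off_def map_replicate_const)
  next
    case (insert i Z)
    then have "i < k" "v (e i)" "v (ones_off Z)" by (auto simp: A_def)
    then show ?case
      using closed[of "ones_off (insert i Z)" "e i" "ones_off Z"] len_e nth_e
      by (auto simp: ones_off_def)
  qed
  have "v xs = (\<forall>i\<in>A. xs ! i)" if xs: "length xs = k" for xs
  proof
    show "\<forall>i\<in>A. xs ! i" if "v xs"
    proof (rule ccontr)
      assume "\<not> (\<forall>i\<in>A. xs ! i)"
      then obtain i where "i \<in> A" "\<not> xs ! i" by blast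
      then have "v (e i)" using closed[of "e i" xs xs] xs len_e nth_e \<open>v xs\<close> by auto
      then show False using \<open>i \<in> A\<close> by (simp add: A_def)
    qed
    show "v xs" if "\<forall>i\<in>A. xs ! i"
    proof -
      have "xs = ones_off {c. c < k \<and> \<not> xs ! c}"
        using xs by (auto simp: ones_off_def list_eq_iff_nth_eq)
      moreover have "v (ones_off {c. c < k \<and> \<not> xs ! c})"
        using that by (intro v_ones_off) auto
      ultimately show ?thesis by simp
    qed
  qed
  moreover have "A \<subseteq> {..<k}" by (auto simp: A_def)
  ultimately show ?thesis using that(2) by blast
qed

definition above_meet :: "(nat \<Rightarrow> bool) set" where
  "above_meet = {x. x 1 \<and> x 2 \<longrightarrow> x 0}"

lemma Lambda_if_total_preserves_above_meet:
  assumes f: "f \<in> O2" "preserves f above_meet"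
  shows "f \<in> Lambda"
proof -
  define k where "k = arity f"
  define v where "v = (\<lambda>xs. the (fn f xs))"
  have k: "1 \<le> k" using f(1) by (simp add: O2_def P2_def k_def)
  have f_eq: "f = total_fn k v" using O2_eq_total_fn[OF f(1)] by (simp add: k_def v_def)
  have closed: "v x" if "length x = k" "length y = k" "length z = k"
    "\<And>c. \<lbrakk>c < k; y ! c; z ! c\<rbrakk> \<Longrightarrow> x ! c" "v y" "v z" for x y z
  proof -
    define r where "r i = (if i = 1 then y else if i = 2 then z else x)" for i :: nat
    have "length (r i) = k" for i using that by (simp add: r_def)
    then have "fn f (r i) = Some (v (r i))" for i by (simp add: f_eq fn_total_fn)
    moreover have "(\<lambda>i. r i ! c) \<in> above_meet" if "c < arity f" for c
      using that \<open>\<And>c. \<lbrakk>c < k; y ! c; z ! c\<rbrakk> \<Longrightarrow> x ! c\<close> by (simp add: above_meet_def r_def k_def)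
    ultimately have "(\<lambda>i. v (r i)) \<in> above_meet"
      using preservesD[OF f(2), of r] by simp
    then show ?thesis using that by (simp add: above_meet_def r_def)
  qed
  show ?thesis
  proof (rule meet_closed_fn_cases[of k v, OF closed])
    assume "\<forall>xs. length xs = k \<longrightarrow> \<not> v xs"
    then have "f = total_fn k (\<lambda>_. False)"
      by (intro pfun_eqI) (simp_all add: f_eq fn_total_fn)
    with k show ?thesis by (intro mem_LambdaI) (simp add: total_fn_const_mem)
  next
    fix A assume A: "A \<subseteq> {..<k}" "\<forall>xs. length xs = k \<longrightarrow> v xs = (\<forall>i\<in>A. xs ! i)"
    then have "finite A" by (meson finite_lessThan finite_subset)
    then have "f = total_fn k (\<lambda>xs. \<forall>i\<in>set (sorted_list_of_set A). xs ! i)"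
      using A by (intro pfun_eqI) (simp_all add: f_eq fn_total_fn)
    moreover have "set (sorted_list_of_set A) \<subseteq> {..<k}" using A \<open>finite A\<close> by simp
    ultimately show ?thesis using k by (intro mem_LambdaI) (simp add: total_fn_Ball_mem)
  qed
qed

lemma above_meet_conj: "x \<in> above_meet \<Longrightarrow> y \<in> above_meet \<Longrightarrow> (\<lambda>i. x i \<and> y i) \<in> above_meet"
  and above_meet_const: "(\<lambda>i. b) \<in> above_meet"
  by (auto simp: above_meet_def)

section \<open>Pairwise unions of a set system\<close>

lemma card_eq_if_pairwise_Un_card_two:
  fixes K :: "nat \<Rightarrow> 'a set"
  assumes n: "2 \<le> n" and U: "finite U" "2 < card U" "(\<Union>i<n. K i) = U"
    and pairs: "\<And>i j. \<lbrakk>i < n; j < n; i \<noteq> j\<rbrakk> \<Longrightarrow> card (K i \<union> K j) = 2"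
  shows "n = card U"
proof -
  have fin: "finite (K i)" "K i \<subseteq> U" if "i < n" for i
    using U that by (auto intro: finite_subset)
  have other: "\<exists>j<n. j \<noteq> i" for i
    using n by (intro exI[of _ "if i = 0 then 1 else 0"]) auto
  have le_one: "card (K i) \<le> 1" if i: "i < n" for i
  proof (rule ccontr)
    assume big: "\<not> card (K i) \<le> 1"
    have "K j \<subseteq> K i" if j: "j < n" "j \<noteq> i" for j
    proof -
      have "card (K i \<union> K j) \<le> card (K i)" using pairs[OF i j(1)] j(2) big by simp
      then have "K i \<union> K j = K i"
        using fin i j card_mono[of "K i \<union> K j" "K i"]
        by (intro card_subset_eq[symmetric]) (auto intro: le_antisym)
      then show ?thesis by blast
    qed
    then have "U \<subseteq> K i" using U(3) by blast
    then have "card U \<le> card (K i)" using fin i by (simp add: card_mono)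
    moreover obtain j where "j < n" "j \<noteq> i" using other by blast
    then have "card (K i) \<le> 2"
      using pairs[OF i \<open>j < n\<close>] \<open>j \<noteq> i\<close> fin i \<open>j < n\<close> card_mono[of "K i \<union> K j" "K i"] by simp
    ultimately show False using U(2) by linarith
  qed
  have one: "card (K i) = 1" if i: "i < n" for i
  proof -
    obtain j where j: "j < n" "j \<noteq> i" using other by blast
    have "2 \<le> card (K i) + card (K j)"
      using pairs[OF i j(1)] j(2) card_Un_le[of "K i" "K j"] by simp
    then show ?thesis using le_one[OF i] le_one[OF j(1)] by linarith
  qed
  have disjoint: "K i \<inter> K j = {}" if "i < n" "j < n" "i \<noteq> j" for i j
  proof -
    have "card (K i) + card (K j) = card (K i \<union> K j) + card (K i \<inter> K j)"
      using fin that by (intro card_Un_Int) auto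
    then show ?thesis using one pairs that fin by simp
  qed
  have "card U = (\<Sum>i<n. card (K i))"
    using U(3) fin disjoint by (metis card_UN_disjoint finite_lessThan lessThan_iff)
  also have "\<dots> = n" using one by simp
  finally show ?thesis by simp
qed

lemma card_Un_two_iff_no_large:
  fixes K :: "nat \<Rightarrow> nat set" and k :: nat
  assumes k: "5 \<le> k" and n: "2 \<le> n" "n \<noteq> k"
    and K: "\<And>i. i < n \<Longrightarrow> K i \<subseteq> {..<k}"
    and union: "card (\<Union>i<n. K i) = 2 \<or> (\<Union>i<n. K i) = {..<k}"
    and pairs: "\<And>i j. \<lbrakk>i < n; j < n; i \<noteq> j\<rbrakk> \<Longrightarrow> card (K i \<union> K j) = 2 \<or> K i \<union> K j = {..<k}"
  defines "B \<equiv> {i. i < n \<and> 3 \<le> card (K i)}"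
  shows "card (\<Union>i<n. K i) = 2 \<longleftrightarrow> B = {}"
    and "\<forall>i<n. \<forall>j<n. i \<noteq> j \<longrightarrow> (card (K i \<union> K j) = 2 \<longleftrightarrow> i \<notin> B \<and> j \<notin> B)"
proof -
  have fin: "finite (K i)" if "i < n" for i using K[OF that] by (meson finite_lessThan finite_subset)
  have pair_iff: "card (K i \<union> K j) = 2 \<longleftrightarrow> i \<notin> B \<and> j \<notin> B" if ij: "i < n" "j < n" "i \<noteq> j" for i j
  proof
    assume two: "card (K i \<union> K j) = 2"
    have "card (K i) \<le> 2" "card (K j) \<le> 2"
      using two card_mono[of "K i \<union> K j" "K i"] card_mono[of "K i \<union> K j" "K j"] fin[OF ij(1)] fin[OF ij(2)]
      by simp_all
    then show "i \<notin> B \<and> j \<notin> B" by (simp add: B_def)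
  next
    assume "i \<notin> B \<and> j \<notin> B"
    then have "card (K i) \<le> 2" "card (K j) \<le> 2" using ij by (simp_all add: B_def)
    then have "card (K i \<union> K j) \<le> 4" using card_Un_le[of "K i" "K j"] by linarith
    have "K i \<union> K j \<noteq> {..<k}"
    proof
      assume "K i \<union> K j = {..<k}"
      then have "card (K i \<union> K j) = k" by simp
      with \<open>card (K i \<union> K j) \<le> 4\<close> k show False by linarith
    qed
    then show "card (K i \<union> K j) = 2" using pairs[OF ij] by blast
  qed
  then show "\<forall>i<n. \<forall>j<n. i \<noteq> j \<longrightarrow> (card (K i \<union> K j) = 2 \<longleftrightarrow> i \<notin> B \<and> j \<notin> B)"
    by blast
  show "card (\<Union>i<n. K i) = 2 \<longleftrightarrow> B = {}"
  proof
    assume two: "card (\<Union>i<n. K i) = 2"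
    have "card (K i) \<le> 2" if "i < n" for i
    proof -
      have "finite (\<Union>i<n. K i)" using fin by simp
      moreover have "K i \<subseteq> (\<Union>i<n. K i)" using that by blast
      ultimately show ?thesis using two card_mono by metis
    qed
    then show "B = {}" by (fastforce simp: B_def)
  next
    assume "B = {}"
    then have pairs_two: "card (K i \<union> K j) = 2" if "i < n" "j < n" "i \<noteq> j" for i j
      using pair_iff that by blast
    have "n = card {..<k}" if "(\<Union>i<n. K i) = {..<k}"
      using card_eq_if_pairwise_Un_card_two[OF n(1), of "{..<k}" K] pairs_two that k by simp
    then show "card (\<Union>i<n. K i) = 2" using union n(2) by auto
  qed
qed

section \<open>The relations \<open>\<rho>\<^sub>n\<close> and the separating partial functions\<close>

definition rho :: "nat \<Rightarrow> (nat \<times> nat \<Rightarrow> bool) set" where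
  "rho n = {x. \<exists>A \<subseteq> {..<n}. (x (0,0) \<longleftrightarrow> A = {})
     \<and> (\<forall>i<n. \<forall>j<n. i \<noteq> j \<longrightarrow> x (i,j) = (i \<notin> A \<and> j \<notin> A))}"

lemma rho_conj:
  assumes "x \<in> rho n" "y \<in> rho n" shows "(\<lambda>p. x p \<and> y p) \<in> rho n"
proof -
  obtain A where A: "A \<subseteq> {..<n}" "x (0,0) \<longleftrightarrow> A = {}"
      "\<forall>i<n. \<forall>j<n. i \<noteq> j \<longrightarrow> x (i,j) = (i \<notin> A \<and> j \<notin> A)"
    using assms(1) by (auto simp: rho_def)
  obtain B where B: "B \<subseteq> {..<n}" "y (0,0) \<longleftrightarrow> B = {}"
      "\<forall>i<n. \<forall>j<n. i \<noteq> j \<longrightarrow> y (i,j) = (i \<notin> B \<and> j \<notin> B)"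
    using assms(2) by (auto simp: rho_def)
  show ?thesis unfolding rho_def
    using A B by (intro CollectI exI[of _ "A \<union> B"]) auto
qed

lemma rho_const: "1 \<le> n \<Longrightarrow> (\<lambda>p. b) \<in> rho n"
  unfolding rho_def
  by (intro CollectI exI[of _ "if b then {} else {..<n}"]) (auto simp: lessThan_empty_iff)

definition zeros :: "bool list \<Rightarrow> nat set" where
  "zeros xs = {c. c < length xs \<and> \<not> xs ! c}"

lemma finite_zeros [simp]: "finite (zeros xs)"
  by (simp add: zeros_def)

lemma ex_less_notin_if_card_less:
  fixes Z :: "nat set"
  assumes "finite Z" "card Z < k" shows "\<exists>c<k. c \<notin> Z"
proof (rule ccontr)
  assume "\<not> (\<exists>c<k. c \<notin> Z)"
  then have "{..<k} \<subseteq> Z" by auto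
  then have "card {..<k} \<le> card Z" by (rule card_mono[OF assms(1)])
  with assms(2) show False by simp
qed

definition two_zeros_fn :: "nat \<Rightarrow> pfun" where
  "two_zeros_fn k = (k, \<lambda>xs. if length xs = k \<and> (card (zeros xs) = 2 \<or> zeros xs = {..<k})
     then Some (card (zeros xs) = 2) else None)"

lemma arity_two_zeros_fn [simp]: "arity (two_zeros_fn k) = k"
  and fn_two_zeros_fn: "fn (two_zeros_fn k) xs = (if length xs = k \<and> (card (zeros xs) = 2 \<or> zeros xs = {..<k})
     then Some (card (zeros xs) = 2) else None)"
  by (simp_all add: two_zeros_fn_def arity_def fn_def)

lemma two_zeros_fn_in_P2: "1 \<le> k \<Longrightarrow> two_zeros_fn k \<in> P2"
  by (simp add: P2_def fn_two_zeros_fn)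

lemma two_zeros_fn_defined:
  assumes "fn (two_zeros_fn k) xs \<noteq> None"
  shows "length xs = k" "card (zeros xs) = 2 \<or> zeros xs = {..<k}"
    "the (fn (two_zeros_fn k) xs) = (card (zeros xs) = 2)"
  using assms by (auto simp: fn_two_zeros_fn split: if_splits)

lemma preserves_two_zeros_fn_above_meet:
  assumes k: "5 \<le> k" shows "preserves (two_zeros_fn k) above_meet"
proof (rule preservesI)
  fix r :: "nat \<Rightarrow> bool list"
  assume dom: "\<And>i. fn (two_zeros_fn k) (r i) \<noteq> None"
    and cols: "\<And>c. c < arity (two_zeros_fn k) \<Longrightarrow> (\<lambda>i. r i ! c) \<in> above_meet"
  note defined = two_zeros_fn_defined[OF dom]
  have "card (zeros (r 0)) = 2" if two: "card (zeros (r 1)) = 2" "card (zeros (r 2)) = 2"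
  proof -
    have "card (zeros (r 1) \<union> zeros (r 2)) < k"
      using card_Un_le[of "zeros (r 1)" "zeros (r 2)"] two k by linarith
    then obtain c where c: "c < k" "c \<notin> zeros (r 1) \<union> zeros (r 2)"
      using ex_less_notin_if_card_less[of "zeros (r 1) \<union> zeros (r 2)" k] by auto
    then have "r 0 ! c" using cols[of c] defined(1) by (simp add: zeros_def above_meet_def)
    then have "zeros (r 0) \<noteq> {..<k}" using c(1) by (auto simp: zeros_def)
    then show ?thesis using defined(2) by blast
  qed
  then show "(\<lambda>i. the (fn (two_zeros_fn k) (r i))) \<in> above_meet"
    by (simp add: above_meet_def defined(3))
qed

lemma not_preserves_two_zeros_fn_rho:
  assumes n: "5 \<le> n" shows "\<not> preserves (two_zeros_fn n) (rho n)"
proof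
  assume pres: "preserves (two_zeros_fn n) (rho n)"
  txt \<open>Row \<open>(i,j)\<close> has its zeros exactly at \<open>i \<noteq> j\<close>, row \<open>(0,0)\<close> is the zero tuple; column \<open>c\<close>
    is the tuple of \<open>\<rho>\<^sub>n\<close> given by \<open>{c}\<close>. The column of values has flag 0 and all other
    entries 1, which no tuple of \<open>\<rho>\<^sub>n\<close> has.\<close>
  define r where "r = (\<lambda>(i, j). if i < n \<and> j < n \<and> i \<noteq> j
      then map (\<lambda>c. c \<noteq> i \<and> c \<noteq> j) [0..<n] else replicate n False)"
  have zeros_pair: "zeros (r (i,j)) = {i, j}" if "i < n" "j < n" "i \<noteq> j" for i j
    using that by (auto simp: r_def zeros_def)
  have zeros_other: "zeros (r (i,j)) = {..<n}" if "\<not> (i < n \<and> j < n \<and> i \<noteq> j)" for i j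
    using that by (auto simp: r_def zeros_def)
  have len: "length (r p) = n" for p by (simp add: r_def split: prod.split)
  have dom: "fn (two_zeros_fn n) (r p) \<noteq> None" for p
  proof -
    obtain i j where p: "p = (i, j)" by fastforce
    show ?thesis
    proof (cases "i < n \<and> j < n \<and> i \<noteq> j")
      case True
      then show ?thesis using zeros_pair[of i j] len[of p] by (simp add: p fn_two_zeros_fn)
    next
      case False
      then show ?thesis using zeros_other[of i j] len[of p] by (simp add: p fn_two_zeros_fn)
    qed
  qed
  have cols: "(\<lambda>p. r p ! c) \<in> rho n" if c: "c < arity (two_zeros_fn n)" for c
  proof -
    have "\<not> r (0,0) ! c" using c by (simp add: r_def)
    moreover have "r (i,j) ! c = (i \<notin> {c} \<and> j \<notin> {c})" if "i < n" "j < n" "i \<noteq> j" for i j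
      using that c by (auto simp: r_def)
    ultimately show ?thesis using c unfolding rho_def by (intro CollectI exI[of _ "{c}"]) simp
  qed
  have "(\<lambda>p. the (fn (two_zeros_fn n) (r p))) \<in> rho n"
    by (rule preservesD[OF pres dom cols])
  then obtain A where A: "A \<subseteq> {..<n}" "the (fn (two_zeros_fn n) (r (0,0))) \<longleftrightarrow> A = {}"
      "\<forall>i<n. \<forall>j<n. i \<noteq> j \<longrightarrow> the (fn (two_zeros_fn n) (r (i,j))) = (i \<notin> A \<and> j \<notin> A)"
    unfolding rho_def mem_Collect_eq by blast
  have "\<not> the (fn (two_zeros_fn n) (r (0,0)))"
    using two_zeros_fn_defined(3)[OF dom] zeros_other[of 0 0] n by simp
  then obtain a where a: "a \<in> A" "a < n" using A(1,2) by blast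
  define b where "b = (if a = 0 then 1 else (0::nat))"
  have b: "b < n" "b \<noteq> a" using n by (auto simp: b_def)
  have "the (fn (two_zeros_fn n) (r (a,b)))"
    using two_zeros_fn_defined(3)[OF dom] zeros_pair[OF a(2) b(1)] b by simp
  with A(3) a b show False by blast
qed

lemma preserves_two_zeros_fn_rho:
  assumes k: "5 \<le> k" and n: "2 \<le> n" "n \<noteq> k"
  shows "preserves (two_zeros_fn k) (rho n)"
proof (rule preservesI)
  fix r :: "nat \<times> nat \<Rightarrow> bool list"
  assume dom: "\<And>p. fn (two_zeros_fn k) (r p) \<noteq> None"
    and cols: "\<And>c. c < arity (two_zeros_fn k) \<Longrightarrow> (\<lambda>p. r p ! c) \<in> rho n"
  note defined = two_zeros_fn_defined[OF dom]
  have "\<forall>c\<in>{..<k}. \<exists>A. A \<subseteq> {..<n} \<and> (r (0,0) ! c \<longleftrightarrow> A = {})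
      \<and> (\<forall>i<n. \<forall>j<n. i \<noteq> j \<longrightarrow> r (i,j) ! c = (i \<notin> A \<and> j \<notin> A))"
    using cols unfolding rho_def by simp
  then obtain A where A: "\<forall>c\<in>{..<k}. A c \<subseteq> {..<n} \<and> (r (0,0) ! c \<longleftrightarrow> A c = {})
      \<and> (\<forall>i<n. \<forall>j<n. i \<noteq> j \<longrightarrow> r (i,j) ! c = (i \<notin> A c \<and> j \<notin> A c))"
    by (rule bchoice[THEN exE])
  define K where "K i = {c. c < k \<and> i \<in> A c}" for i
  have K_sub: "K i \<subseteq> {..<k}" for i by (auto simp: K_def)
  have zeros_flag: "zeros (r (0,0)) = (\<Union>i<n. K i)"
  proof (rule set_eqI)
    fix c
    show "c \<in> zeros (r (0,0)) \<longleftrightarrow> c \<in> (\<Union>i<n. K i)"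
    proof (cases "c < k")
      case True
      then have "A c \<subseteq> {..<n}" "\<not> r (0,0) ! c \<longleftrightarrow> A c \<noteq> {}" using A by auto
      then show ?thesis using True defined(1) by (auto simp: zeros_def K_def)
    qed (simp add: zeros_def K_def defined(1))
  qed
  have zeros_pair: "zeros (r (i,j)) = K i \<union> K j" if "i < n" "j < n" "i \<noteq> j" for i j
    using A defined(1)[of "(i,j)"] that by (auto simp: zeros_def K_def)
  have union: "card (\<Union>i<n. K i) = 2 \<or> (\<Union>i<n. K i) = {..<k}"
    using defined(2)[of "(0,0)"] zeros_flag by simp
  have pairs: "card (K i \<union> K j) = 2 \<or> K i \<union> K j = {..<k}" if "i < n" "j < n" "i \<noteq> j" for i j
    using defined(2)[of "(i,j)"] zeros_pair[OF that] by simp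
  define B where "B = {i. i < n \<and> 3 \<le> card (K i)}"
  note B_iff = card_Un_two_iff_no_large[OF k n K_sub union pairs, folded B_def]
  show "(\<lambda>p. the (fn (two_zeros_fn k) (r p))) \<in> rho n"
    unfolding rho_def mem_Collect_eq
  proof (intro exI[of _ B] conjI allI impI)
    show "B \<subseteq> {..<n}" by (auto simp: B_def)
    show "the (fn (two_zeros_fn k) (r (0,0))) \<longleftrightarrow> B = {}"
      using defined(3)[of "(0,0)"] zeros_flag B_iff(1) by simp
    show "the (fn (two_zeros_fn k) (r (i,j))) = (i \<notin> B \<and> j \<notin> B)" if "i < n" "j < n" "i \<noteq> j" for i j
      using defined(3)[of "(i,j)"] zeros_pair[OF that] B_iff(2) that by simp
  qed
qed

section \<open>Continuum many strong partial clones\<close>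

definition X_of :: "nat set \<Rightarrow> pfun set" where
  "X_of S = \<Inter>(insert (pPol above_meet) ((\<lambda>n. pPol (rho (n + 5))) ` (- S)))"

lemma mem_X_of_iff:
  "f \<in> X_of S \<longleftrightarrow> f \<in> P2 \<and> preserves f above_meet \<and> (\<forall>n. n \<notin> S \<longrightarrow> preserves f (rho (n + 5)))"
  by (auto simp: X_of_def pPol_def)

lemma X_of_in_I_str: "X_of S \<in> I_str Lambda"
proof -
  have "partial_clone (X_of S)"
    unfolding X_of_def by (intro partial_clone_Inter) (auto intro: partial_clone_pPol)
  moreover have "strong (X_of S)"
    unfolding X_of_def by (intro strong_Inter) (auto intro: strong_pPol)
  moreover have "X_of S \<inter> O2 = Lambda"
  proof
    show "X_of S \<inter> O2 \<subseteq> Lambda"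
      by (auto simp: mem_X_of_iff intro: Lambda_if_total_preserves_above_meet)
    have "Lambda \<subseteq> pPol above_meet"
      by (rule Lambda_subset_pPol) (simp_all add: above_meet_conj above_meet_const)
    moreover have "Lambda \<subseteq> pPol (rho (n + 5))" for n
      by (rule Lambda_subset_pPol) (simp_all add: rho_conj rho_const)
    ultimately show "Lambda \<subseteq> X_of S \<inter> O2"
      using Lambda_subset_O2 by (auto simp: X_of_def)
  qed
  ultimately show ?thesis by (simp add: I_str_def)
qed

lemma two_zeros_fn_mem_X_of_iff: "two_zeros_fn (n + 5) \<in> X_of S \<longleftrightarrow> n \<in> S"
proof
  show "n \<in> S" if "two_zeros_fn (n + 5) \<in> X_of S"
    using that not_preserves_two_zeros_fn_rho[of "n + 5"] by (auto simp: mem_X_of_iff)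
  show "two_zeros_fn (n + 5) \<in> X_of S" if "n \<in> S"
  proof -
    have "preserves (two_zeros_fn (n + 5)) (rho (m + 5))" if "m \<notin> S" for m
      using that \<open>n \<in> S\<close> by (intro preserves_two_zeros_fn_rho) auto
    then show ?thesis
      using two_zeros_fn_in_P2 preserves_two_zeros_fn_above_meet by (simp add: mem_X_of_iff)
  qed
qed

lemma inj_X_of: "inj X_of"
proof (rule injI)
  fix S T assume "X_of S = X_of T"
  then show "S = T" using two_zeros_fn_mem_X_of_iff by blast
qed

lemma countable_P2: "countable P2"
proof -
  define code where "code p = (arity p, map (fn p) (List.n_lists (arity p) [True, False]))" for p
  have "inj_on code P2"
  proof (rule inj_onI)
    fix p q assume p: "p \<in> P2" and q: "q \<in> P2" and eq: "code p = code q"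
    then have ar: "arity p = arity q"
      and tables: "map (fn p) (List.n_lists (arity p) [True, False])
        = map (fn q) (List.n_lists (arity p) [True, False])"
      by (auto simp: code_def)
    have "fn p xs = fn q xs" for xs
    proof (cases "length xs = arity p")
      case True
      then have "xs \<in> set (List.n_lists (arity p) [True, False])" by (auto simp: set_n_lists)
      then show ?thesis using tables by (simp add: map_eq_conv)
    next
      case False
      then have "fn p xs = None" "fn q xs = None" using p q ar unfolding P2_def by auto
      then show ?thesis by simp
    qed
    then show "p = q" using ar by (rule pfun_eqI[rotated])
  qed
  then show ?thesis
    by (meson countable_image_inj_on countableI_type countable_subset subset_UNIV)
qed

lemma countable_Pow_lepoll_nat_sets: "countable A \<Longrightarrow> Pow A \<lesssim> (UNIV :: nat set set)"
  unfolding countable_def lepoll_def' by (blast intro: inj_on_image_Pow)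

theorem mainTheorem5:
  shows "I_str Lambda \<approx> (UNIV :: real set)"
proof -
  have "I_str Lambda \<subseteq> Pow P2" by (auto simp: I_str_def partial_clone_def)
  then have upper: "I_str Lambda \<lesssim> (UNIV :: nat set set)"
    using countable_Pow_lepoll_nat_sets[OF countable_P2] subset_imp_lepoll lepoll_trans by blast
  have lower: "(UNIV :: nat set set) \<lesssim> I_str Lambda"
    unfolding lepoll_def' using inj_X_of X_of_in_I_str by blast
  have "I_str Lambda \<approx> (UNIV :: nat set set)" by (rule lepoll_antisym[OF upper lower])
  then show ?thesis using nat_sets_eqpoll_reals eqpoll_trans by blast
qed

end
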